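(* The following cut rules are admissible in $\mathsf{G}(\mathbf{KT}^+_D)$: (Cut$_1$) if $\vdash\emptyset\mid\Gamma\Rightarrow\Delta,\lambda$ and $\vdash\emptyset\mid\lambda,\Gamma'\Rightarrow\Delta'$ then $\vdash\emptyset\mid\Gamma,\Gamma'\Rightarrow\Delta,\Delta'$; (Cut$_2$) if $\vdash\Sigma\mid\Gamma\Rightarrow\Delta,D_G\lambda$ and $\vdash D_G\lambda,\Sigma'\mid\Gamma'\Rightarrow\Delta'$ then $\vdash\Sigma',\Sigma\mid\Gamma,\Gamma'\Rightarrow\Delta,\Delta'$. Here $\Gamma,\Gamma',\Delta,\Delta'$ are arbitrary finite multisets of formulas, $\Sigma,\Sigma'$ finite multisets of outmost-boxed formulas, $\lambda$ a formula and $G\in\mathsf{Grp}$.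
   Context: Language: fix a finite nonempty set $\mathsf{Agt}$ of agents and a countable set $\mathsf{Prop}$ of propositional variables; $\mathsf{Grp}$ is the set of nonempty subsets of $\mathsf{Agt}$. Formulas: $\alpha::=p\mid\bot\mid\alpha\wedge\alpha\mid\alpha\vee\alpha\mid\alpha\rightarrow\alpha\mid\neg\alpha\mid D_G\alpha$ ($p\in\mathsf{Prop}$, $G\in\mathsf{Grp}$). Outmost-boxed formula: one of the form $D_G\gamma$. Calculus $\mathsf{G}(\mathbf{KT}^+_D)$ ($\vdash$ denotes derivability in it, i.e. being the root of a finite tree built from initial sequents by the rules): a T-sequent $\Sigma\mid\Gamma\Rightarrow\Delta$ consists of finite multisets $\Gamma,\Delta$ of formulas and a finite multiset $\Sigma$ of outmost-boxed formulas. Initial sequents: $\Sigma\mid\Gamma,p\Rightarrow p,\Delta$ ($p\in\mathsf{Prop}$) and $\Sigma\mid\bot,\Gamma\Rightarrow\Delta$. Propositional rules (with $\Sigma$ unchanged): $(R\wedge)$ from $\Sigma\mid\Gamma\Rightarrow\Delta,\alpha_1$ and $\Sigma\mid\Gamma\Rightarrow\Delta,\alpha_2$ infer $\Sigma\mid\Gamma\Rightarrow\Delta,\alpha_1\wedge\alpha_2$; $(L\wedge)$ from $\Sigma\mid\alpha_1,\alpha_2,\Gamma\Rightarrow\Delta$ infer $\Sigma\mid\alpha_1\wedge\alpha_2,\Gamma\Rightarrow\Delta$; $(R\vee)$ from $\Sigma\mid\Gamma\Rightarrow\Delta,\alpha_1,\alpha_2$ infer $\Sigma\mid\Gamma\Rightarrow\Delta,\alpha_1\vee\alpha_2$;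 $(L\vee)$ from $\Sigma\mid\alpha_1,\Gamma\Rightarrow\Delta$ and $\Sigma\mid\alpha_2,\Gamma\Rightarrow\Delta$ infer $\Sigma\mid\alpha_1\vee\alpha_2,\Gamma\Rightarrow\Delta$; $(R\rightarrow)$ from $\Sigma\mid\alpha_1,\Gamma\Rightarrow\Delta,\alpha_2$ infer $\Sigma\mid\Gamma\Rightarrow\Delta,\alpha_1\rightarrow\alpha_2$; $(L\rightarrow)$ from $\Sigma\mid\Gamma\Rightarrow\Delta,\alpha_1$ and $\Sigma\mid\alpha_2,\Gamma\Rightarrow\Delta$ infer $\Sigma\mid\alpha_1\rightarrow\alpha_2,\Gamma\Rightarrow\Delta$; $(R\neg)$ from $\Sigma\mid\alpha,\Gamma\Rightarrow\Delta$ infer $\Sigma\mid\Gamma\Rightarrow\Delta,\neg\alpha$; $(L\neg)$ from $\Sigma\mid\Gamma\Rightarrow\Delta,\alpha$ infer $\Sigma\mid\neg\alpha,\Gamma\Rightarrow\Delta$. Modal rules: $(D_K^+)$: from $\emptyset\mid\alpha_1,\dots,\alpha_n\Rightarrow\beta$ ($n\ge0$) infer $\Sigma,D_{G_1}\alpha_1,\dots,D_{G_n}\alpha_n\mid\Pi\Rightarrow D_G\beta,\Omega$, provided $G_i\subseteq G$ for all $i$, $\Sigma$ consists only of formulas $D_H\gamma$ with $H\not\subseteq G$, $\Pi$ only of propositional variables and $\bot$, and $\Omega$ only of propositional variables, $\bot$ and outmost-boxed formulas; $(D_T^+)$: from $D_G\alpha,\Sigma\mid\Gamma,\alpha\Rightarrow\Delta$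 infer $\Sigma\mid\Gamma,D_G\alpha\Rightarrow\Delta$. *)

theory Defs
  imports Main "HOL-Library.Multiset" "HOL-Library.Countable"
begin

text \<open>Formulas over agents of type 'a (the finite nonempty set Agt is the
universe of the type 'a::finite) and propositional variables of type 'p.\<close>

datatype ('a, 'p) fm =
    Atom 'p
  | Bot
  | And "('a, 'p) fm" "('a, 'p) fm"
  | Or "('a, 'p) fm" "('a, 'p) fm"
  | Imp "('a, 'p) fm" "('a, 'p) fm"
  | Neg "('a, 'p) fm"
  | Box "'a set" "('a, 'p) fm"

text \<open>Well-formedness: every group index G is a nonempty subset of Agt (G in Grp).\<close>
fun wf :: "('a, 'p) fm \<Rightarrow> bool" where
  "wf (Atom p) = True"
| "wf Bot = True"
| "wf (And a b) = (wf a \<and> wf b)"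
| "wf (Or a b) = (wf a \<and> wf b)"
| "wf (Imp a b) = (wf a \<and> wf b)"
| "wf (Neg a) = wf a"
| "wf (Box G a) = (G \<noteq> {} \<and> wf a)"

definition wf_ms :: "('a, 'p) fm multiset \<Rightarrow> bool" where
  "wf_ms M = (\<forall>x\<in>#M. wf x)"

fun boxed :: "('a, 'p) fm \<Rightarrow> bool" where
  "boxed (Box G a) = True"
| "boxed _ = False"

definition boxed_ms :: "('a, 'p) fm multiset \<Rightarrow> bool" where
  "boxed_ms M = (\<forall>x\<in>#M. boxed x)"

fun atom_or_bot :: "('a, 'p) fm \<Rightarrow> bool" where
  "atom_or_bot (Atom p) = True"
| "atom_or_bot Bot = True"
| "atom_or_bot _ = False"

text \<open>Derivability in G(KT+_D): derivable S Gam Del means |- S | Gam => Del.\<close>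
inductive derivable :: "('a, 'p) fm multiset \<Rightarrow> ('a, 'p) fm multiset \<Rightarrow> ('a, 'p) fm multiset \<Rightarrow> bool" where
  init_atom: "boxed_ms S \<Longrightarrow> derivable S (add_mset (Atom p) Gam) (add_mset (Atom p) Del)"
| init_bot: "boxed_ms S \<Longrightarrow> derivable S (add_mset Bot Gam) Del"
| R_and: "derivable S Gam (add_mset a1 Del) \<Longrightarrow> derivable S Gam (add_mset a2 Del) \<Longrightarrow>
          derivable S Gam (add_mset (And a1 a2) Del)"
| L_and: "derivable S (add_mset a1 (add_mset a2 Gam)) Del \<Longrightarrow>
          derivable S (add_mset (And a1 a2) Gam) Del"
| R_or: "derivable S Gam (add_mset a1 (add_mset a2 Del)) \<Longrightarrow>
          derivable S Gam (add_mset (Or a1 a2) Del)"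
| L_or: "derivable S (add_mset a1 Gam) Del \<Longrightarrow> derivable S (add_mset a2 Gam) Del \<Longrightarrow>
          derivable S (add_mset (Or a1 a2) Gam) Del"
| R_imp: "derivable S (add_mset a1 Gam) (add_mset a2 Del) \<Longrightarrow>
          derivable S Gam (add_mset (Imp a1 a2) Del)"
| L_imp: "derivable S Gam (add_mset a1 Del) \<Longrightarrow> derivable S (add_mset a2 Gam) Del \<Longrightarrow>
          derivable S (add_mset (Imp a1 a2) Gam) Del"
| R_neg: "derivable S (add_mset a Gam) Del \<Longrightarrow> derivable S Gam (add_mset (Neg a) Del)"
| L_neg: "derivable S Gam (add_mset a Del) \<Longrightarrow> derivable S (add_mset (Neg a) Gam) Del"
| D_K: "derivable {#} (image_mset snd Ps) {#b#} \<Longrightarrow>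
        (\<forall>(H, a)\<in>set_mset Ps. H \<subseteq> G) \<Longrightarrow>
        (\<forall>x\<in>#S. \<exists>H c. x = Box H c \<and> \<not> H \<subseteq> G) \<Longrightarrow>
        (\<forall>x\<in>#Pi. atom_or_bot x) \<Longrightarrow>
        (\<forall>x\<in>#Om. atom_or_bot x \<or> boxed x) \<Longrightarrow>
        derivable (S + image_mset (\<lambda>(H, a). Box H a) Ps) Pi (add_mset (Box G b) Om)"
| D_T: "derivable (add_mset (Box G a) S) (add_mset a Gam) Del \<Longrightarrow>
        derivable S (add_mset (Box G a) Gam) Del"

end

(*
  Weakening and contraction are admissible. For atoms, Bot and (on the right) boxed formulas
  this is an induction on derivations, since the rule D_K^+ tolerates exactly such formulas
  in its context. Compound formulas are handled by induction on the formula: weakening builds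
  them from their components with the logical rules, contraction goes through the
  invertibility of all rules other than D_K^+.

  Cut_1 is proved by induction on the cut formula. A compound cut formula is removed by
  inverting both premises and cutting on its components, followed by contraction. For D_G g,
  inverting the right premise by D_T^+ leaves a Cut_2 on D_G g; its result is cut on g
  against the left premise, in which D_G g can be replaced by g (the T axiom).

  Cut_2, assuming Cut_1 for l, is an induction on the derivation of the right premise. The
  formula D_G l in its boxed context is only used by a D_K^+ step for some D_H b with
  G <= H. There one follows D_G l up the left derivation to the D_K^+ step that introduced
  it, and composes the two premises of these D_K^+ steps by a Cut_1 on l.
*)
theory Submission
  imports Defs
begin

abbreviation boxes :: "('a set \<times> ('a, 'p) fm) multiset \<Rightarrow> ('a, 'p) fm multiset" where
  "boxes Ps \<equiv> image_mset (\<lambda>(H, a). Box H a) Ps"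

fun unbox :: "('a, 'p) fm \<Rightarrow> ('a, 'p) fm" where
  "unbox (Box K a) = a"
| "unbox x = x"

lemma boxed_ms_empty [simp]: "boxed_ms {#}"
  and boxed_ms_add_mset [simp]: "boxed_ms (add_mset x A) \<longleftrightarrow> boxed x \<and> boxed_ms A"
  and boxed_ms_union [simp]: "boxed_ms (A + B) \<longleftrightarrow> boxed_ms A \<and> boxed_ms B"
  by (auto simp: boxed_ms_def)

lemma boxed_ms_diff: "boxed_ms A \<Longrightarrow> boxed_ms (A - B)"
  by (auto simp: boxed_ms_def dest: in_diffD)

lemma boxed_ms_boxes [simp]: "boxed_ms (boxes Ps)"
  by (induction Ps) auto

lemma boxed_ms_imp_boxes: "boxed_ms T \<Longrightarrow> \<exists>Ps. T = boxes Ps"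
proof (induction T)
  case (add x T)
  then obtain K c Ps where "x = Box K c" and "T = boxes Ps" by (cases x) auto
  then have "add_mset x T = boxes (add_mset (K, c) Ps)" by simp
  then show ?case by blast
qed simp

lemma Box_in_boxes_iff: "Box K c \<in># boxes Ps \<longleftrightarrow> (K, c) \<in># Ps"
  by force

lemma unbox_boxes [simp]: "image_mset unbox (boxes Ps) = image_mset snd Ps"
  by (induction Ps) auto

lemma add_mset_diff_single_swap:
  "x \<in># M - {#x#} \<Longrightarrow> add_mset y M - {#x#} = add_mset y (M - {#x#})"
  by (simp add: in_diffD)

lemma union_diff_single_left: "x \<in># A \<Longrightarrow> A + B - {#x#} = A - {#x#} + B"
  by (simp add: multiset_eq_iff)

lemma atom_or_bot_or_boxed_neq:
  "atom_or_bot A \<or> boxed A \<Longrightarrow> A \<noteq> And a b \<and> A \<noteq> Or a b \<and> A \<noteq> Imp a b \<and> A \<noteq> Neg a"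
  by auto

lemma atom_or_bot_neq_Box: "atom_or_bot A \<Longrightarrow> A \<noteq> Box K a"
  by auto

lemmas derivable_context_rules = derivable.R_and derivable.L_and derivable.R_or derivable.L_or
  derivable.R_imp derivable.L_imp derivable.R_neg derivable.L_neg derivable.D_T

lemma derivable_boxed_ms: "derivable S G D \<Longrightarrow> boxed_ms S"
  by (induction rule: derivable.induct) (auto simp: boxed_ms_def)

section \<open>Weakening\<close>

lemma derivable_weaken_left_atomic:
  assumes "atom_or_bot A"
  shows "derivable S G D \<Longrightarrow> derivable S (add_mset A G) D"
proof (induction rule: derivable.induct)
  case (D_K Ps b G S Pi Om)
  then show ?case using assms by (intro derivable.D_K) auto
qed (simp_all add: add_mset_commute[of A] derivable.init_atom derivable.init_bot
    derivable_context_rules)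

lemma derivable_weaken_right_atomic_or_boxed:
  assumes "atom_or_bot A \<or> boxed A"
  shows "derivable S G D \<Longrightarrow> derivable S G (add_mset A D)"
proof (induction rule: derivable.induct)
  case (D_K Ps b G S Pi Om)
  then show ?case using assms by (subst add_mset_commute, intro derivable.D_K) auto
qed (simp_all add: add_mset_commute[of A] derivable.init_atom derivable.init_bot
    derivable_context_rules)

lemma derivable_weaken_context_Box:
  assumes weaken_left: "\<And>S G D. derivable S G D \<Longrightarrow> derivable S (add_mset c G) D"
  shows "derivable S G D \<Longrightarrow> derivable (add_mset (Box K c) S) G D"
proof (induction rule: derivable.induct)
  case (D_K Ps b G S Pi Om)
  show ?case
  proof (cases "K \<subseteq> G")
    case True
    have "derivable (S + boxes (add_mset (K, c) Ps)) Pi (add_mset (Box G b) Om)"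
      using D_K True weaken_left[OF D_K(1)] by (intro derivable.D_K) auto
    then show ?thesis by simp
  next
    case False
    have "derivable (add_mset (Box K c) S + boxes Ps) Pi (add_mset (Box G b) Om)"
      using D_K False by (intro derivable.D_K) auto
    then show ?thesis by simp
  qed
qed (simp_all add: add_mset_commute[of "Box K c"] derivable.init_atom derivable.init_bot
    derivable_context_rules)

lemma derivable_weaken_formula:
  "(\<forall>S G D. derivable S G D \<longrightarrow> derivable S (add_mset A G) D) \<and>
   (\<forall>S G D. derivable S G D \<longrightarrow> derivable S G (add_mset A D))"
proof (induction A)
  case (Box K c)
  then have "derivable S (add_mset (Box K c) G) D" if "derivable S G D" for S G D
    using that by (blast intro: derivable.D_T derivable_weaken_context_Box)
  then show ?case by (simp add: derivable_weaken_right_atomic_or_boxed)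
qed (auto intro: derivable.intros derivable_weaken_left_atomic
    derivable_weaken_right_atomic_or_boxed)

lemma derivable_weaken_left1: "derivable S G D \<Longrightarrow> derivable S (add_mset A G) D"
  and derivable_weaken_right1: "derivable S G D \<Longrightarrow> derivable S G (add_mset A D)"
  using derivable_weaken_formula by blast+

lemma derivable_weaken_context1: "derivable S G D \<Longrightarrow> derivable (add_mset (Box K A) S) G D"
  by (rule derivable_weaken_context_Box[OF derivable_weaken_left1])

lemma derivable_weaken_left: "derivable S G D \<Longrightarrow> derivable S (G + G') D"
  by (induction G') (auto dest: derivable_weaken_left1)

lemma derivable_weaken_right: "derivable S G D \<Longrightarrow> derivable S G (D + D')"
  by (induction D') (auto dest: derivable_weaken_right1)

lemma derivable_weaken_context: "boxed_ms S' \<Longrightarrow> derivable S G D \<Longrightarrow> derivable (S + S') G D"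
proof (induction S')
  case (add x S')
  then obtain K c where "x = Box K c" by (cases x) auto
  with add show ?case using derivable_weaken_context1 by simp
qed simp

lemma derivable_weaken:
  "boxed_ms S' \<Longrightarrow> derivable S G D \<Longrightarrow> derivable (S + S') (G + G') (D + D')"
  using derivable_weaken_context derivable_weaken_left derivable_weaken_right by blast

section \<open>Invertibility\<close>

fun derivable_left_premises ::
  "('a, 'p) fm \<Rightarrow> ('a, 'p) fm multiset \<Rightarrow> ('a, 'p) fm multiset \<Rightarrow> ('a, 'p) fm multiset \<Rightarrow> bool" where
  "derivable_left_premises (And a b) S G D = derivable S (add_mset a (add_mset b G)) D"
| "derivable_left_premises (Or a b) S G D =
     (derivable S (add_mset a G) D \<and> derivable S (add_mset b G) D)"
| "derivable_left_premises (Imp a b) S G D =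
     (derivable S G (add_mset a D) \<and> derivable S (add_mset b G) D)"
| "derivable_left_premises (Neg a) S G D = derivable S G (add_mset a D)"
| "derivable_left_premises (Box K a) S G D = derivable (add_mset (Box K a) S) (add_mset a G) D"
| "derivable_left_premises _ S G D = False"

fun derivable_right_premises ::
  "('a, 'p) fm \<Rightarrow> ('a, 'p) fm multiset \<Rightarrow> ('a, 'p) fm multiset \<Rightarrow> ('a, 'p) fm multiset \<Rightarrow> bool" where
  "derivable_right_premises (And a b) S G D =
     (derivable S G (add_mset a D) \<and> derivable S G (add_mset b D))"
| "derivable_right_premises (Or a b) S G D = derivable S G (add_mset a (add_mset b D))"
| "derivable_right_premises (Imp a b) S G D = derivable S (add_mset a G) (add_mset b D)"
| "derivable_right_premises (Neg a) S G D = derivable S (add_mset a G) D"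
| "derivable_right_premises _ S G D = False"

lemma derivable_invert_left:
  assumes principal:
      "\<And>S G D. derivable_left_premises X S G D \<Longrightarrow> derivable (S + Sx) (G + Gx) (D + Dx)"
    and "boxed_ms Sx" and "\<not> atom_or_bot X"
  shows "derivable S G D \<Longrightarrow> X \<in># G \<Longrightarrow> derivable (S + Sx) (G - {#X#} + Gx) (D + Dx)"
proof (induction rule: derivable.induct)
  case (L_and S a1 a2 Gam Del)
  then show ?case using principal[of S Gam Del]
    by (cases "X = And a1 a2") (auto intro: derivable.L_and)
next
  case (L_or S a1 Gam Del a2)
  then show ?case using principal[of S Gam Del]
    by (cases "X = Or a1 a2") (auto intro: derivable.L_or)
next
  case (L_imp S Gam a1 Del a2)
  then show ?case using principal[of S Gam Del]
    by (cases "X = Imp a1 a2") (auto intro: derivable.L_imp)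
next
  case (L_neg S Gam a Del)
  then show ?case using principal[of S Gam Del]
    by (cases "X = Neg a") (auto intro: derivable.L_neg)
next
  case (D_T G a S Gam Del)
  then show ?case using principal[of S Gam Del]
    by (cases "X = Box G a") (auto intro: derivable.D_T)
next
  case (D_K Ps b G S Pi Om)
  then show ?case using assms by auto
qed (use assms in \<open>auto simp: derivable.init_atom derivable.init_bot intro: derivable.intros\<close>)

lemma derivable_invert_right:
  assumes principal:
      "\<And>S G D. derivable_right_premises X S G D \<Longrightarrow> derivable (S + Sx) (G + Gx) (D + Dx)"
    and "boxed_ms Sx" and "\<not> atom_or_bot X" and "\<not> boxed X"
  shows "derivable S G D \<Longrightarrow> X \<in># D \<Longrightarrow> derivable (S + Sx) (G + Gx) (D - {#X#} + Dx)"
proof (induction rule: derivable.induct)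
  case (R_and S Gam a1 Del a2)
  then show ?case using principal[of S Gam Del]
    by (cases "X = And a1 a2") (auto intro: derivable.R_and)
next
  case (R_or S Gam a1 a2 Del)
  then show ?case using principal[of S Gam Del]
    by (cases "X = Or a1 a2") (auto intro: derivable.R_or)
next
  case (R_imp S a1 Gam a2 Del)
  then show ?case using principal[of S Gam Del]
    by (cases "X = Imp a1 a2") (auto intro: derivable.R_imp)
next
  case (R_neg S a Gam Del)
  then show ?case using principal[of S Gam Del]
    by (cases "X = Neg a") (auto intro: derivable.R_neg)
next
  case (D_K Ps b G S Pi Om)
  then show ?case using assms by auto
qed (use assms in \<open>auto simp: derivable.init_atom derivable.init_bot intro: derivable.intros\<close>)

lemma derivable_L_and_inv:
  "derivable S (add_mset (And a b) G) D \<Longrightarrow> derivable S (add_mset a (add_mset b G)) D"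
  using derivable_invert_left[where X = "And a b" and Sx = "{#}" and Gx = "{#a, b#}" and Dx = "{#}"
      and G = "add_mset (And a b) G"]
  by (simp add: add_mset_commute)

lemma derivable_L_or_inv1: "derivable S (add_mset (Or a b) G) D \<Longrightarrow> derivable S (add_mset a G) D"
  and derivable_L_or_inv2: "derivable S (add_mset (Or a b) G) D \<Longrightarrow> derivable S (add_mset b G) D"
  using derivable_invert_left[where X = "Or a b" and Sx = "{#}" and Gx = "{#a#}" and Dx = "{#}"
      and G = "add_mset (Or a b) G"]
    derivable_invert_left[where X = "Or a b" and Sx = "{#}" and Gx = "{#b#}" and Dx = "{#}"
      and G = "add_mset (Or a b) G"]
  by simp_all

lemma derivable_L_imp_inv1: "derivable S (add_mset (Imp a b) G) D \<Longrightarrow> derivable S G (add_mset a D)"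
  and derivable_L_imp_inv2: "derivable S (add_mset (Imp a b) G) D \<Longrightarrow> derivable S (add_mset b G) D"
  using derivable_invert_left[where X = "Imp a b" and Sx = "{#}" and Gx = "{#}" and Dx = "{#a#}"
      and G = "add_mset (Imp a b) G"]
    derivable_invert_left[where X = "Imp a b" and Sx = "{#}" and Gx = "{#b#}" and Dx = "{#}"
      and G = "add_mset (Imp a b) G"]
  by simp_all

lemma derivable_L_neg_inv: "derivable S (add_mset (Neg a) G) D \<Longrightarrow> derivable S G (add_mset a D)"
  using derivable_invert_left[where X = "Neg a" and Sx = "{#}" and Gx = "{#}" and Dx = "{#a#}"
      and G = "add_mset (Neg a) G"]
  by simp

lemma derivable_D_T_inv:
  "derivable S (add_mset (Box K a) G) D \<Longrightarrow> derivable (add_mset (Box K a) S) (add_mset a G) D"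
  using derivable_invert_left[where X = "Box K a" and Sx = "{#Box K a#}" and Gx = "{#a#}"
      and Dx = "{#}"
      and G = "add_mset (Box K a) G"]
  by simp

lemma derivable_R_and_inv1: "derivable S G (add_mset (And a b) D) \<Longrightarrow> derivable S G (add_mset a D)"
  and derivable_R_and_inv2: "derivable S G (add_mset (And a b) D) \<Longrightarrow> derivable S G (add_mset b D)"
  using derivable_invert_right[where X = "And a b" and Sx = "{#}" and Gx = "{#}" and Dx = "{#a#}"
      and D = "add_mset (And a b) D"]
    derivable_invert_right[where X = "And a b" and Sx = "{#}" and Gx = "{#}" and Dx = "{#b#}"
      and D = "add_mset (And a b) D"]
  by simp_all

lemma derivable_R_or_inv:
  "derivable S G (add_mset (Or a b) D) \<Longrightarrow> derivable S G (add_mset a (add_mset b D))"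
  using derivable_invert_right[where X = "Or a b" and Sx = "{#}" and Gx = "{#}" and Dx = "{#a, b#}"
      and D = "add_mset (Or a b) D"]
  by (simp add: add_mset_commute)

lemma derivable_R_imp_inv:
  "derivable S G (add_mset (Imp a b) D) \<Longrightarrow> derivable S (add_mset a G) (add_mset b D)"
  using derivable_invert_right[where X = "Imp a b" and Sx = "{#}" and Gx = "{#a#}" and Dx = "{#b#}"
      and D = "add_mset (Imp a b) D"]
  by simp

lemma derivable_R_neg_inv: "derivable S G (add_mset (Neg a) D) \<Longrightarrow> derivable S (add_mset a G) D"
  using derivable_invert_right[where X = "Neg a" and Sx = "{#}" and Gx = "{#a#}" and Dx = "{#}"
      and D = "add_mset (Neg a) D"]
  by simp

section \<open>Contraction\<close>

lemma derivable_contract_left_atomic: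
  assumes "atom_or_bot A"
  shows "derivable S G D \<Longrightarrow> A \<in># G - {#A#} \<Longrightarrow> derivable S (G - {#A#}) D"
proof (induction rule: derivable.induct)
  case (init_atom S p Gam Del)
  show ?case
  proof (cases "A = Atom p")
    case True
    with init_atom obtain Gam' where "Gam = add_mset (Atom p) Gam'"
      by (metis add_mset_remove_trivial multi_member_split)
    with init_atom True show ?thesis by (simp add: derivable.init_atom)
  next
    case False
    with init_atom have "A \<in># Gam" by (auto dest: in_diffD)
    with init_atom show ?thesis by (simp add: derivable.init_atom)
  qed
next
  case (init_bot S Gam Del)
  show ?case
  proof (cases "A = Bot")
    case True
    with init_bot obtain Gam' where "Gam = add_mset Bot Gam'"
      by (metis add_mset_remove_trivial multi_member_split)
    with init_bot True show ?thesis by (simp add: derivable.init_bot)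
  next
    case False
    with init_bot have "A \<in># Gam" by (auto dest: in_diffD)
    with init_bot show ?thesis by (simp add: derivable.init_bot)
  qed
next
  case (D_K Ps b G S Pi Om)
  then show ?case by (intro derivable.D_K) (auto dest: in_diffD)
qed (use assms in \<open>simp_all add: atom_or_bot_or_boxed_neq atom_or_bot_neq_Box
      diff_union_swap[symmetric] add_mset_diff_single_swap derivable_context_rules\<close>)

lemma derivable_contract_right_atomic_or_boxed:
  assumes "atom_or_bot A \<or> boxed A"
  shows "derivable S G D \<Longrightarrow> A \<in># D - {#A#} \<Longrightarrow> derivable S G (D - {#A#})"
proof (induction rule: derivable.induct)
  case (init_atom S p Gam Del)
  show ?case
  proof (cases "A = Atom p")
    case True
    with init_atom obtain Del' where "Del = add_mset (Atom p) Del'"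
      by (metis add_mset_remove_trivial multi_member_split)
    with init_atom True show ?thesis by (simp add: derivable.init_atom)
  next
    case False
    with init_atom have "A \<in># Del" by (auto dest: in_diffD)
    with init_atom show ?thesis by (simp add: derivable.init_atom)
  qed
next
  case (D_K Ps b G S Pi Om)
  show ?case
  proof (cases "A = Box G b")
    case True
    with D_K obtain Om' where "Om = add_mset (Box G b) Om'"
      by (metis add_mset_remove_trivial multi_member_split)
    with D_K True show ?thesis by (simp add: derivable.D_K)
  next
    case False
    with D_K have "A \<in># Om" by (auto dest: in_diffD)
    with D_K show ?thesis by (auto dest: in_diffD intro!: derivable.D_K)
  qed
qed (use assms in \<open>simp_all add: atom_or_bot_or_boxed_neq diff_union_swap[symmetric]
      add_mset_diff_single_swap derivable.init_bot derivable_context_rules\<close>)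

lemma derivable_contract_context_Box:
  assumes contract_left:
      "\<And>S G D. derivable S (add_mset c (add_mset c G)) D \<Longrightarrow> derivable S (add_mset c G) D"
  shows "derivable S G D \<Longrightarrow> Box K c \<in># S - {#Box K c#} \<Longrightarrow> derivable (S - {#Box K c#}) G D"
proof (induction rule: derivable.induct)
  case (D_K Ps b G S Pi Om)
  show ?case
  proof (cases "K \<subseteq> G")
    case True
    then have "Box K c \<notin># S" using D_K.hyps(3) by auto
    moreover have "Box K c \<in># S + boxes Ps" using D_K.prems by (rule in_diffD)
    ultimately have "(K, c) \<in># Ps" by (metis Box_in_boxes_iff union_iff)
    then obtain Ps1 where Ps1: "Ps = add_mset (K, c) Ps1" by (metis multi_member_split)
    with D_K.prems have "Box K c \<in># S + boxes Ps1" by simp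
    with \<open>Box K c \<notin># S\<close> have "(K, c) \<in># Ps1" by (metis Box_in_boxes_iff union_iff)
    then obtain Ps' where Ps: "Ps = add_mset (K, c) (add_mset (K, c) Ps')"
      using Ps1 by (metis multi_member_split)
    have "derivable {#} (image_mset snd (add_mset (K, c) Ps')) {#b#}"
      using contract_left D_K.hyps(1) Ps by simp
    with D_K.hyps Ps have "derivable (S + boxes (add_mset (K, c) Ps')) Pi (add_mset (Box G b) Om)"
      by (intro derivable.D_K) auto
    with Ps show ?thesis by simp
  next
    case False
    then have "(K, c) \<notin># Ps" using D_K.hyps(2) by auto
    then have "Box K c \<notin># boxes Ps" unfolding Box_in_boxes_iff .
    moreover have "Box K c \<in># S + boxes Ps" using D_K.prems by (rule in_diffD)
    ultimately have "Box K c \<in># S" by (meson union_iff)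
    then have "S + boxes Ps - {#Box K c#} = S - {#Box K c#} + boxes Ps"
      by (rule union_diff_single_left)
    moreover have "derivable (S - {#Box K c#} + boxes Ps) Pi (add_mset (Box G b) Om)"
      using D_K by (intro derivable.D_K) (auto dest: in_diffD)
    ultimately show ?thesis by simp
  qed
next
  case (D_T G a S Gam Del)
  then have "Box K c \<in># S" by (auto dest: in_diffD)
  with D_T show ?case by (simp add: derivable.D_T)
qed (simp_all add: boxed_ms_diff derivable.init_atom derivable.init_bot derivable_context_rules)

definition admissible_contraction :: "('a, 'p) fm \<Rightarrow> bool" where
  "admissible_contraction A \<longleftrightarrow>
     (\<forall>S G D. derivable S (add_mset A (add_mset A G)) D \<longrightarrow> derivable S (add_mset A G) D) \<and>
     (\<forall>S G D. derivable S G (add_mset A (add_mset A D)) \<longrightarrow> derivable S G (add_mset A D))"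

lemma admissible_contractionI:
  assumes "\<And>S G D. derivable S (add_mset A (add_mset A G)) D \<Longrightarrow> derivable S (add_mset A G) D"
    and "\<And>S G D. derivable S G (add_mset A (add_mset A D)) \<Longrightarrow> derivable S G (add_mset A D)"
  shows "admissible_contraction A"
  using assms unfolding admissible_contraction_def by blast

lemma admissible_contraction_leftD:
    "admissible_contraction A \<Longrightarrow> derivable S (add_mset A (add_mset A G)) D \<Longrightarrow>
      derivable S (add_mset A G) D"
  and admissible_contraction_rightD:
    "admissible_contraction A \<Longrightarrow> derivable S G (add_mset A (add_mset A D)) \<Longrightarrow>
      derivable S G (add_mset A D)"
  unfolding admissible_contraction_def by blast+

lemma admissible_contraction_atomic:
  assumes "atom_or_bot A"
  shows "admissible_contraction A"
proof (rule admissible_contractionI)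
  show "derivable S (add_mset A G) D" if "derivable S (add_mset A (add_mset A G)) D" for S G D
    using derivable_contract_left_atomic[OF assms that] by simp
  show "derivable S G (add_mset A D)" if "derivable S G (add_mset A (add_mset A D))" for S G D
    using derivable_contract_right_atomic_or_boxed[OF _ that, of A] assms by simp
qed

lemma admissible_contraction_And:
  fixes a b :: "('a, 'p) fm"
  assumes a: "admissible_contraction a" and b: "admissible_contraction b"
  shows "admissible_contraction (And a b)"
proof (rule admissible_contractionI)
  show "derivable S (add_mset (And a b) G) D"
    if d: "derivable S (add_mset (And a b) (add_mset (And a b) G)) D" for S G D
  proof -
    have "derivable S (add_mset a (add_mset b (add_mset (And a b) G))) D"
      using derivable_L_and_inv[OF d] .
    then have "derivable S (add_mset (And a b) (add_mset a (add_mset b G))) D"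
      by (simp add: add_mset_commute)
    then have "derivable S (add_mset a (add_mset b (add_mset a (add_mset b G)))) D"
      by (rule derivable_L_and_inv)
    then have "derivable S (add_mset a (add_mset a (add_mset b (add_mset b G)))) D"
      by (simp add: add_mset_commute)
    then have "derivable S (add_mset a (add_mset b (add_mset b G))) D"
      by (rule admissible_contraction_leftD[OF a])
    then have "derivable S (add_mset b (add_mset b (add_mset a G))) D"
      by (simp add: add_mset_commute)
    then have "derivable S (add_mset b (add_mset a G)) D"
      by (rule admissible_contraction_leftD[OF b])
    then have "derivable S (add_mset a (add_mset b G)) D" by (simp add: add_mset_commute)
    then show ?thesis by (rule derivable.L_and)
  qed
next
  show "derivable S G (add_mset (And a b) D)"
    if d: "derivable S G (add_mset (And a b) (add_mset (And a b) D))" for S G D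
  proof -
    have "derivable S G (add_mset a (add_mset (And a b) D))" using derivable_R_and_inv1[OF d] .
    then have "derivable S G (add_mset (And a b) (add_mset a D))" by (simp add: add_mset_commute)
    then have "derivable S G (add_mset a (add_mset a D))" by (rule derivable_R_and_inv1)
    then have 1: "derivable S G (add_mset a D)" by (rule admissible_contraction_rightD[OF a])
    have "derivable S G (add_mset b (add_mset (And a b) D))" using derivable_R_and_inv2[OF d] .
    then have "derivable S G (add_mset (And a b) (add_mset b D))" by (simp add: add_mset_commute)
    then have "derivable S G (add_mset b (add_mset b D))" by (rule derivable_R_and_inv2)
    then have 2: "derivable S G (add_mset b D)" by (rule admissible_contraction_rightD[OF b])
    from 1 2 show ?thesis by (rule derivable.R_and)
  qed
qed

lemma admissible_contraction_Or:
  fixes a b :: "('a, 'p) fm"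
  assumes a: "admissible_contraction a" and b: "admissible_contraction b"
  shows "admissible_contraction (Or a b)"
proof (rule admissible_contractionI)
  show "derivable S (add_mset (Or a b) G) D"
    if d: "derivable S (add_mset (Or a b) (add_mset (Or a b) G)) D" for S G D
  proof -
    have "derivable S (add_mset a (add_mset (Or a b) G)) D" using derivable_L_or_inv1[OF d] .
    then have "derivable S (add_mset (Or a b) (add_mset a G)) D" by (simp add: add_mset_commute)
    then have "derivable S (add_mset a (add_mset a G)) D" by (rule derivable_L_or_inv1)
    then have 1: "derivable S (add_mset a G) D" by (rule admissible_contraction_leftD[OF a])
    have "derivable S (add_mset b (add_mset (Or a b) G)) D" using derivable_L_or_inv2[OF d] .
    then have "derivable S (add_mset (Or a b) (add_mset b G)) D" by (simp add: add_mset_commute)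
    then have "derivable S (add_mset b (add_mset b G)) D" by (rule derivable_L_or_inv2)
    then have 2: "derivable S (add_mset b G) D" by (rule admissible_contraction_leftD[OF b])
    from 1 2 show ?thesis by (rule derivable.L_or)
  qed
next
  show "derivable S G (add_mset (Or a b) D)"
    if d: "derivable S G (add_mset (Or a b) (add_mset (Or a b) D))" for S G D
  proof -
    have "derivable S G (add_mset a (add_mset b (add_mset (Or a b) D)))"
      using derivable_R_or_inv[OF d] .
    then have "derivable S G (add_mset (Or a b) (add_mset a (add_mset b D)))"
      by (simp add: add_mset_commute)
    then have "derivable S G (add_mset a (add_mset b (add_mset a (add_mset b D))))"
      by (rule derivable_R_or_inv)
    then have "derivable S G (add_mset a (add_mset a (add_mset b (add_mset b D))))"
      by (simp add: add_mset_commute)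
    then have "derivable S G (add_mset a (add_mset b (add_mset b D)))"
      by (rule admissible_contraction_rightD[OF a])
    then have "derivable S G (add_mset b (add_mset b (add_mset a D)))"
      by (simp add: add_mset_commute)
    then have "derivable S G (add_mset b (add_mset a D))"
      by (rule admissible_contraction_rightD[OF b])
    then have "derivable S G (add_mset a (add_mset b D))" by (simp add: add_mset_commute)
    then show ?thesis by (rule derivable.R_or)
  qed
qed

lemma admissible_contraction_Imp:
  fixes a b :: "('a, 'p) fm"
  assumes a: "admissible_contraction a" and b: "admissible_contraction b"
  shows "admissible_contraction (Imp a b)"
proof (rule admissible_contractionI)
  show "derivable S (add_mset (Imp a b) G) D"
    if d: "derivable S (add_mset (Imp a b) (add_mset (Imp a b) G)) D" for S G D
  proof -
    have "derivable S (add_mset (Imp a b) G) (add_mset a D)" using derivable_L_imp_inv1[OF d] .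
    then have "derivable S G (add_mset a (add_mset a D))" by (rule derivable_L_imp_inv1)
    then have 1: "derivable S G (add_mset a D)" by (rule admissible_contraction_rightD[OF a])
    have "derivable S (add_mset b (add_mset (Imp a b) G)) D" using derivable_L_imp_inv2[OF d] .
    then have "derivable S (add_mset (Imp a b) (add_mset b G)) D" by (simp add: add_mset_commute)
    then have "derivable S (add_mset b (add_mset b G)) D" by (rule derivable_L_imp_inv2)
    then have 2: "derivable S (add_mset b G) D" by (rule admissible_contraction_leftD[OF b])
    from 1 2 show ?thesis by (rule derivable.L_imp)
  qed
next
  show "derivable S G (add_mset (Imp a b) D)"
    if d: "derivable S G (add_mset (Imp a b) (add_mset (Imp a b) D))" for S G D
  proof -
    have "derivable S (add_mset a G) (add_mset b (add_mset (Imp a b) D))"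
      using derivable_R_imp_inv[OF d] .
    then have "derivable S (add_mset a G) (add_mset (Imp a b) (add_mset b D))"
      by (simp add: add_mset_commute)
    then have "derivable S (add_mset a (add_mset a G)) (add_mset b (add_mset b D))"
      by (rule derivable_R_imp_inv)
    then have "derivable S (add_mset a G) (add_mset b (add_mset b D))"
      by (rule admissible_contraction_leftD[OF a])
    then have "derivable S (add_mset a G) (add_mset b D)"
      by (rule admissible_contraction_rightD[OF b])
    then show ?thesis by (rule derivable.R_imp)
  qed
qed

lemma admissible_contraction_Neg:
  fixes a :: "('a, 'p) fm"
  assumes a: "admissible_contraction a"
  shows "admissible_contraction (Neg a)"
proof (rule admissible_contractionI)
  show "derivable S (add_mset (Neg a) G) D"
    if d: "derivable S (add_mset (Neg a) (add_mset (Neg a) G)) D" for S G D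
  proof -
    have "derivable S (add_mset (Neg a) G) (add_mset a D)" using derivable_L_neg_inv[OF d] .
    then have "derivable S G (add_mset a (add_mset a D))" by (rule derivable_L_neg_inv)
    then have "derivable S G (add_mset a D)" by (rule admissible_contraction_rightD[OF a])
    then show ?thesis by (rule derivable.L_neg)
  qed
next
  show "derivable S G (add_mset (Neg a) D)"
    if d: "derivable S G (add_mset (Neg a) (add_mset (Neg a) D))" for S G D
  proof -
    have "derivable S (add_mset a G) (add_mset (Neg a) D)" using derivable_R_neg_inv[OF d] .
    then have "derivable S (add_mset a (add_mset a G)) D" by (rule derivable_R_neg_inv)
    then have "derivable S (add_mset a G) D" by (rule admissible_contraction_leftD[OF a])
    then show ?thesis by (rule derivable.R_neg)
  qed
qed

lemma admissible_contraction_Box: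
  fixes c :: "('a, 'p) fm"
  assumes c: "admissible_contraction c"
  shows "admissible_contraction (Box K c)"
proof (rule admissible_contractionI)
  have context_c: "derivable (add_mset (Box K c) S) G D"
    if "derivable (add_mset (Box K c) (add_mset (Box K c) S)) G D" for S G D
    using derivable_contract_context_Box[OF admissible_contraction_leftD[OF c] that, of K] by simp
  show "derivable S (add_mset (Box K c) G) D"
    if d: "derivable S (add_mset (Box K c) (add_mset (Box K c) G)) D" for S G D
  proof -
    have "derivable (add_mset (Box K c) S) (add_mset c (add_mset (Box K c) G)) D"
      using derivable_D_T_inv[OF d] .
    then have "derivable (add_mset (Box K c) S) (add_mset (Box K c) (add_mset c G)) D"
      by (simp add: add_mset_commute)
    then have "derivable (add_mset (Box K c) (add_mset (Box K c) S)) (add_mset c (add_mset c G)) D"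
      by (rule derivable_D_T_inv)
    then have "derivable (add_mset (Box K c) (add_mset (Box K c) S)) (add_mset c G) D"
      by (rule admissible_contraction_leftD[OF c])
    then have "derivable (add_mset (Box K c) S) (add_mset c G) D" by (rule context_c)
    then show ?thesis by (rule derivable.D_T)
  qed
next
  show "derivable S G (add_mset (Box K c) D)"
    if "derivable S G (add_mset (Box K c) (add_mset (Box K c) D))" for S G D
    using derivable_contract_right_atomic_or_boxed[OF _ that, of "Box K c"] by simp
qed

lemma admissible_contraction: "admissible_contraction A"
  by (induction A) (simp_all add: admissible_contraction_atomic admissible_contraction_And
      admissible_contraction_Or admissible_contraction_Imp admissible_contraction_Neg
      admissible_contraction_Box)

lemma derivable_contract_left1:
    "derivable S (add_mset A (add_mset A G)) D \<Longrightarrow> derivable S (add_mset A G) D"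
  and derivable_contract_right1:
    "derivable S G (add_mset A (add_mset A D)) \<Longrightarrow> derivable S G (add_mset A D)"
  using admissible_contraction admissible_contraction_leftD admissible_contraction_rightD
  by blast+

lemma derivable_contract_left: "derivable S (G + G + G') D \<Longrightarrow> derivable S (G + G') D"
proof (induction G arbitrary: G')
  case (add x G)
  from add.prems have "derivable S (add_mset x (add_mset x (G + G + G'))) D"
    by (simp add: add_mset_commute)
  then have "derivable S (G + G + add_mset x G') D"
    by (simp add: derivable_contract_left1)
  then have "derivable S (G + add_mset x G') D" by (rule add.IH)
  then show ?case by simp
qed simp

lemma derivable_contract_right: "derivable S G (D + D + D') \<Longrightarrow> derivable S G (D + D')"
proof (induction D arbitrary: D')
  case (add x D)
  from add.prems have "derivable S G (add_mset x (add_mset x (D + D + D')))"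
    by (simp add: add_mset_commute)
  then have "derivable S G (D + D + add_mset x D')"
    by (simp add: derivable_contract_right1)
  then have "derivable S G (D + add_mset x D')" by (rule add.IH)
  then show ?case by simp
qed simp

lemma derivable_contract: "derivable S (G + G + G') (D + D + D') \<Longrightarrow> derivable S (G + G') (D + D')"
  using derivable_contract_left derivable_contract_right by blast

section \<open>Cut\<close>

lemma derivable_drop_Bot_right: "derivable S G D \<Longrightarrow> Bot \<in># D \<Longrightarrow> derivable S G (D - {#Bot#})"
proof (induction rule: derivable.induct)
  case (D_K Ps b G S Pi Om)
  then have "Bot \<in># Om" by auto
  moreover have "derivable (S + boxes Ps) Pi (add_mset (Box G b) (Om - {#Bot#}))"
    using D_K by (intro derivable.D_K) (auto dest: in_diffD)
  ultimately show ?case by simp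
qed (simp_all add: derivable.init_atom derivable.init_bot derivable_context_rules)

text \<open>The T axiom on the right: a box in the succedent may be replaced by its body, provided
  the bodies of the boxed context are added on the left, since a box introduced by D_K^+ comes
  from a premise whose antecedent consists of such bodies.\<close>

lemma derivable_unbox_right:
  "derivable S G D \<Longrightarrow> Box K l \<in># D \<Longrightarrow>
    derivable S (G + image_mset unbox S) (add_mset l (D - {#Box K l#}))"
proof (induction rule: derivable.induct)
  case (D_K Ps b G S Pi Om)
  have "boxed_ms (S + boxes Ps)" using D_K.hyps(3) by (auto simp: boxed_ms_def)
  show ?case
  proof (cases "Box K l = Box G b")
    case True
    have "derivable ({#} + (S + boxes Ps)) (image_mset snd Ps + (Pi + image_mset unbox S))
        ({#b#} + Om)"
      using derivable_weaken[OF \<open>boxed_ms (S + boxes Ps)\<close> D_K.hyps(1)] .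
    with True show ?thesis by (simp add: ac_simps)
  next
    case False
    then have "Box K l \<in># Om" using D_K.prems by auto
    have "derivable (S + boxes Ps) Pi (add_mset (Box G b) (Om - {#Box K l#}))"
      using D_K by (intro derivable.D_K) (auto dest: in_diffD)
    from derivable_weaken[OF boxed_ms_empty this, of "image_mset unbox (S + boxes Ps)" "{#l#}"]
    show ?thesis using \<open>Box K l \<in># Om\<close> by (simp add: add_mset_commute)
  qed
next
  case (D_T G a S Gam Del)
  then have "derivable (add_mset (Box G a) S) (add_mset a (add_mset a (Gam + image_mset unbox S)))
      (add_mset l (Del - {#Box K l#}))"
    by simp
  then have "derivable (add_mset (Box G a) S) (add_mset a (Gam + image_mset unbox S))
      (add_mset l (Del - {#Box K l#}))"
    by (rule derivable_contract_left1)
  then show ?case by (simp add: derivable.D_T)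
qed (simp_all add: add_mset_commute[of l] derivable.init_atom derivable.init_bot
    derivable_context_rules)

lemma derivable_cut_Atom:
  assumes left: "derivable {#} Gam (add_mset (Atom p) Del)"
  shows "derivable S Gam' Del' \<Longrightarrow> Atom p \<in># Gam' \<Longrightarrow>
    derivable S (Gam + (Gam' - {#Atom p#})) (Del + Del')"
proof (induction rule: derivable.induct)
  case (init_atom S q Gam' Del')
  show ?case
  proof (cases "q = p")
    case True
    have "derivable ({#} + S) (Gam + Gam') (add_mset (Atom p) Del + Del')"
      using derivable_weaken[OF init_atom.hyps left] .
    with True show ?thesis by simp
  next
    case False
    with init_atom show ?thesis by (simp add: derivable.init_atom)
  qed
next
  case (D_K Ps b G S Pi Om)
  have "derivable (S + boxes Ps) (Pi - {#Atom p#}) (add_mset (Box G b) Om)"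
    using D_K by (intro derivable.D_K) (auto dest: in_diffD)
  from derivable_weaken[OF boxed_ms_empty this, of Gam Del]
  show ?case by (simp add: ac_simps)
qed (simp_all add: derivable.init_bot derivable_context_rules)

text \<open>Boxes of the context whose group is contained in H cannot be side formulas of D_K^+;
  they become principal instead, after weakening the premise.\<close>

lemma derivable_D_K_weakened:
  fixes Ps :: "('a set \<times> ('a, 'p) fm) multiset"
  assumes premise: "derivable {#} (image_mset snd Ps) {#b#}"
    and "\<forall>(K, a)\<in>set_mset Ps. K \<subseteq> H" and "boxed_ms T"
  shows "derivable (T + boxes Ps) Gam (add_mset (Box H b) Del)"
proof -
  obtain Qs where "T = boxes Qs" using boxed_ms_imp_boxes[OF \<open>boxed_ms T\<close>] by auto
  define below_H where "below_H = (\<lambda>(K :: 'a set, a :: ('a, 'p) fm). K \<subseteq> H)"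
  define inside where "inside = filter_mset below_H Qs"
  define outside where "outside = filter_mset (\<lambda>x. \<not> below_H x) Qs"
  have "Qs = inside + outside"
    unfolding inside_def outside_def by (rule multiset_partition)
  then have context_split: "boxes outside + boxes (Ps + inside) = T + boxes Ps"
    using \<open>T = boxes Qs\<close> by (simp add: ac_simps)
  have "derivable {#} (image_mset snd (Ps + inside)) {#b#}"
    using derivable_weaken_left[OF premise] by simp
  then have "derivable (boxes outside + boxes (Ps + inside)) {#} {#Box H b#}"
    using assms(2) by (intro derivable.D_K) (auto simp: inside_def outside_def below_H_def)
  then have "derivable (T + boxes Ps + {#}) ({#} + Gam) ({#Box H b#} + Del)"
    unfolding context_split by (rule derivable_weaken[OF boxed_ms_empty])
  then show ?thesis by simp
qed

definition admissible_cut1 :: "('a, 'p) fm \<Rightarrow> bool" where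
  "admissible_cut1 l \<longleftrightarrow> (\<forall>Gam Del Gam' Del'.
     derivable {#} Gam (add_mset l Del) \<longrightarrow> derivable {#} (add_mset l Gam') Del' \<longrightarrow>
     derivable {#} (Gam + Gam') (Del + Del'))"

lemma admissible_cut1D:
  "admissible_cut1 l \<Longrightarrow> derivable {#} Gam (add_mset l Del) \<Longrightarrow> derivable {#} (add_mset l Gam') Del' \<Longrightarrow>
    derivable {#} (Gam + Gam') (Del + Del')"
  unfolding admissible_cut1_def by blast

lemma admissible_cut1I:
  fixes l :: "('a, 'p) fm"
  assumes "\<And>Gam Del Gam' Del'. derivable {#} Gam (add_mset l Del) \<Longrightarrow>
    derivable {#} (add_mset l Gam') Del' \<Longrightarrow> derivable {#} (Gam + Gam') (Del + Del')"
  shows "admissible_cut1 l"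
  using assms unfolding admissible_cut1_def by blast

text \<open>The principal case of Cut_2, where D_G l is used by a D_K^+ step with premise
  l, snd Q \<Rightarrow> b: the box D_G l is traced up the left premise and replaced by D_H b.\<close>

lemma derivable_replace_Box_right:
  assumes cut_l: "admissible_cut1 l"
    and premise: "derivable {#} (add_mset l (image_mset snd Q)) {#b#}"
    and Q: "\<forall>(K, a)\<in>set_mset Q. K \<subseteq> H" and "G \<subseteq> H" and "boxed_ms T"
  shows "derivable S Gam Del \<Longrightarrow> Box G l \<in># Del \<Longrightarrow>
    derivable (S + T + boxes Q) Gam (add_mset (Box H b) (Del - {#Box G l#}))"
proof (induction rule: derivable.induct)
  case (D_K Ps c K S Pi Om)
  have "boxed_ms S" using D_K.hyps(3) by (auto simp: boxed_ms_def)
  show ?case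
  proof (cases "Box G l = Box K c")
    case True
    then have "c = l" and "K \<subseteq> H" using \<open>G \<subseteq> H\<close> by simp_all
    have "derivable {#} (image_mset snd Ps + image_mset snd Q) ({#} + {#b#})"
      using admissible_cut1D[OF cut_l D_K.hyps(1)[unfolded \<open>c = l\<close>] premise] .
    moreover have "\<forall>(K', a)\<in>set_mset (Ps + Q). K' \<subseteq> H"
      using D_K.hyps(2) Q \<open>K \<subseteq> H\<close> by (auto simp: case_prod_beta)
    ultimately have "derivable (S + T + boxes (Ps + Q)) Pi (add_mset (Box H b) Om)"
      using \<open>boxed_ms S\<close> \<open>boxed_ms T\<close> by (intro derivable_D_K_weakened) auto
    with True show ?thesis by (simp add: ac_simps)
  next
    case False
    then have "Box G l \<in># Om" using D_K.prems by auto
    have "derivable (S + boxes Ps) Pi (add_mset (Box K c) (Om - {#Box G l#}))"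
      using D_K by (intro derivable.D_K) (auto dest: in_diffD)
    from derivable_weaken[OF _ this, of "T + boxes Q" "{#}" "{#Box H b#}"]
    have "derivable (S + boxes Ps + (T + boxes Q)) Pi
        (add_mset (Box K c) (Om - {#Box G l#}) + {#Box H b#})"
      using \<open>boxed_ms T\<close> by simp
    with \<open>Box G l \<in># Om\<close> False show ?thesis by (simp add: add_mset_commute add.assoc)
  qed
qed (use \<open>boxed_ms T\<close> in \<open>simp_all add: add_mset_commute[of "Box H b"] derivable.init_atom
      derivable.init_bot derivable_context_rules\<close>)

lemma derivable_cut2:
  assumes cut_l: "admissible_cut1 l" and left: "derivable Sig Gam (add_mset (Box G l) Del)"
  shows "derivable S Gam' Del' \<Longrightarrow> Box G l \<in># S \<Longrightarrow>
    derivable (S - {#Box G l#} + Sig) (Gam + Gam') (Del + Del')"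
proof (induction rule: derivable.induct)
  case (D_K Ps b H S Pi Om)
  have "boxed_ms S" using D_K.hyps(3) by (auto simp: boxed_ms_def)
  show ?case
  proof (cases "G \<subseteq> H")
    case True
    then have "Box G l \<notin># S" using D_K.hyps(3) by auto
    moreover have "Box G l \<in># S + boxes Ps" using D_K.prems .
    ultimately have "Box G l \<in># boxes Ps" by (meson union_iff)
    then have "(G, l) \<in># Ps" unfolding Box_in_boxes_iff .
    then obtain Ps' where Ps: "Ps = add_mset (G, l) Ps'" by (metis multi_member_split)
    have "derivable (Sig + S + boxes Ps') Gam (add_mset (Box H b) Del)"
      using derivable_replace_Box_right[OF cut_l _ _ True \<open>boxed_ms S\<close> left] D_K.hyps(1,2) Ps
      by simp
    then have "derivable (Sig + S + boxes Ps' + {#}) (Gam + Pi) (add_mset (Box H b) Del + Om)"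
      by (rule derivable_weaken[OF boxed_ms_empty])
    with Ps show ?thesis by (simp add: ac_simps)
  next
    case False
    then have "(G, l) \<notin># Ps" using D_K.hyps(2) by auto
    then have "Box G l \<notin># boxes Ps" unfolding Box_in_boxes_iff .
    with D_K.prems have "Box G l \<in># S" by (meson union_iff)
    have "derivable (S - {#Box G l#} + boxes Ps) Pi (add_mset (Box H b) Om)"
      using D_K by (intro derivable.D_K) (auto dest: in_diffD)
    then have "derivable (S - {#Box G l#} + boxes Ps + Sig) (Pi + Gam)
        (add_mset (Box H b) Om + Del)"
      using derivable_boxed_ms[OF left] by (rule derivable_weaken[rotated])
    moreover have "S + boxes Ps - {#Box G l#} = S - {#Box G l#} + boxes Ps"
      using \<open>Box G l \<in># S\<close> by (rule union_diff_single_left)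
    ultimately show ?thesis by (simp add: add.commute)
  qed
qed (use derivable_boxed_ms[OF left] in
      \<open>simp_all add: boxed_ms_diff derivable.init_atom derivable.init_bot derivable_context_rules\<close>)

lemma admissible_cut1_Atom: "admissible_cut1 (Atom p :: ('a, 'p) fm)"
proof (rule admissible_cut1I)
  fix Gam Del Gam' Del' :: "('a, 'p) fm multiset"
  assume left: "derivable {#} Gam (add_mset (Atom p) Del)"
    and right: "derivable {#} (add_mset (Atom p) Gam') Del'"
  show "derivable {#} (Gam + Gam') (Del + Del')"
    using derivable_cut_Atom[OF left right] by simp
qed

lemma admissible_cut1_Bot: "admissible_cut1 (Bot :: ('a, 'p) fm)"
proof (rule admissible_cut1I)
  fix Gam Del Gam' Del' :: "('a, 'p) fm multiset"
  assume left: "derivable {#} Gam (add_mset Bot Del)"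
  then have "derivable {#} Gam Del"
    using derivable_drop_Bot_right by fastforce
  then show "derivable {#} (Gam + Gam') (Del + Del')"
    using derivable_weaken[OF boxed_ms_empty] by fastforce
qed

lemma admissible_cut1_And:
  fixes a b :: "('a, 'p) fm"
  assumes cut_a: "admissible_cut1 a" and cut_b: "admissible_cut1 b"
  shows "admissible_cut1 (And a b)"
proof (rule admissible_cut1I)
  fix Gam Del Gam' Del' :: "('a, 'p) fm multiset"
  assume left: "derivable {#} Gam (add_mset (And a b) Del)"
    and right: "derivable {#} (add_mset (And a b) Gam') Del'"
  have "derivable {#} (Gam + add_mset b Gam') (Del + Del')"
    using admissible_cut1D[OF cut_a derivable_R_and_inv1[OF left]
        derivable_L_and_inv[OF right]] .
  then have "derivable {#} (Gam + Gam + Gam') (Del + Del + Del')"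
    using admissible_cut1D[OF cut_b derivable_R_and_inv2[OF left]] by (simp add: add.assoc)
  then show "derivable {#} (Gam + Gam') (Del + Del')"
    by (rule derivable_contract)
qed

lemma admissible_cut1_Or:
  fixes a b :: "('a, 'p) fm"
  assumes cut_a: "admissible_cut1 a" and cut_b: "admissible_cut1 b"
  shows "admissible_cut1 (Or a b)"
proof (rule admissible_cut1I)
  fix Gam Del Gam' Del' :: "('a, 'p) fm multiset"
  assume left: "derivable {#} Gam (add_mset (Or a b) Del)"
    and right: "derivable {#} (add_mset (Or a b) Gam') Del'"
  have "derivable {#} (Gam + Gam') (add_mset b Del + Del')"
    using admissible_cut1D[OF cut_a derivable_R_or_inv[OF left]
        derivable_L_or_inv1[OF right]] .
  then have "derivable {#} (Gam + Gam' + Gam') (Del + Del' + Del')"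
    using admissible_cut1D[OF cut_b _ derivable_L_or_inv2[OF right]] by simp
  then have "derivable {#} (Gam' + Gam' + Gam) (Del' + Del' + Del)"
    by (simp add: ac_simps)
  then have "derivable {#} (Gam' + Gam) (Del' + Del)"
    by (rule derivable_contract)
  then show "derivable {#} (Gam + Gam') (Del + Del')"
    by (simp add: ac_simps)
qed

lemma admissible_cut1_Imp:
  fixes a b :: "('a, 'p) fm"
  assumes cut_a: "admissible_cut1 a" and cut_b: "admissible_cut1 b"
  shows "admissible_cut1 (Imp a b)"
proof (rule admissible_cut1I)
  fix Gam Del Gam' Del' :: "('a, 'p) fm multiset"
  assume left: "derivable {#} Gam (add_mset (Imp a b) Del)"
    and right: "derivable {#} (add_mset (Imp a b) Gam') Del'"
  have "derivable {#} (Gam' + Gam) (Del' + add_mset b Del)"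
    using admissible_cut1D[OF cut_a derivable_L_imp_inv1[OF right]
        derivable_R_imp_inv[OF left]] .
  then have "derivable {#} (Gam' + Gam + Gam') (Del' + Del + Del')"
    using admissible_cut1D[OF cut_b _ derivable_L_imp_inv2[OF right]] by simp
  then have "derivable {#} (Gam' + Gam' + Gam) (Del' + Del' + Del)"
    by (simp add: ac_simps)
  then have "derivable {#} (Gam' + Gam) (Del' + Del)"
    by (rule derivable_contract)
  then show "derivable {#} (Gam + Gam') (Del + Del')"
    by (simp add: ac_simps)
qed

lemma admissible_cut1_Neg:
  fixes a :: "('a, 'p) fm"
  assumes cut_a: "admissible_cut1 a"
  shows "admissible_cut1 (Neg a)"
proof (rule admissible_cut1I)
  fix Gam Del Gam' Del' :: "('a, 'p) fm multiset"
  assume left: "derivable {#} Gam (add_mset (Neg a) Del)"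
    and right: "derivable {#} (add_mset (Neg a) Gam') Del'"
  have "derivable {#} (Gam' + Gam) (Del' + Del)"
    using admissible_cut1D[OF cut_a derivable_L_neg_inv[OF right]
        derivable_R_neg_inv[OF left]] .
  then show "derivable {#} (Gam + Gam') (Del + Del')"
    by (simp add: ac_simps)
qed

lemma admissible_cut1_Box:
  fixes c :: "('a, 'p) fm"
  assumes cut_c: "admissible_cut1 c"
  shows "admissible_cut1 (Box G c)"
proof (rule admissible_cut1I)
  fix Gam Del Gam' Del' :: "('a, 'p) fm multiset"
  assume left: "derivable {#} Gam (add_mset (Box G c) Del)"
    and right: "derivable {#} (add_mset (Box G c) Gam') Del'"
  have "derivable {#Box G c#} (add_mset c Gam') Del'"
    using derivable_D_T_inv[OF right] by simp
  from derivable_cut2[OF cut_c left this]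
  have "derivable {#} (add_mset c (Gam + Gam')) (Del + Del')" by simp
  moreover have "derivable {#} Gam (add_mset c Del)"
    using derivable_unbox_right[OF left, of G c] by simp
  ultimately have "derivable {#} (Gam + Gam + Gam') (Del + Del + Del')"
    using admissible_cut1D[OF cut_c] by (simp add: add.assoc)
  then show "derivable {#} (Gam + Gam') (Del + Del')"
    by (rule derivable_contract)
qed

lemma admissible_cut1: "admissible_cut1 l"
  by (induction l) (simp_all add: admissible_cut1_Atom admissible_cut1_Bot admissible_cut1_And
      admissible_cut1_Or admissible_cut1_Imp admissible_cut1_Neg admissible_cut1_Box)

theorem proposition6p12:
  fixes dummy :: "('a::finite, 'p::countable) fm"
  shows "(\<forall>(Gam :: ('a, 'p) fm multiset) Del Gam' Del' l.
            wf_ms Gam \<and> wf_ms Del \<and> wf_ms Gam' \<and> wf_ms Del' \<and> wf l \<and>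
            derivable {#} Gam (add_mset l Del) \<and> derivable {#} (add_mset l Gam') Del'
            \<longrightarrow> derivable {#} (Gam + Gam') (Del + Del'))
       \<and> (\<forall>(Sig :: ('a, 'p) fm multiset) Sig' Gam Del Gam' Del' G l.
            boxed_ms Sig \<and> boxed_ms Sig' \<and> wf_ms Sig \<and> wf_ms Sig' \<and>
            wf_ms Gam \<and> wf_ms Del \<and> wf_ms Gam' \<and> wf_ms Del' \<and> G \<noteq> {} \<and> wf l \<and>
            derivable Sig Gam (add_mset (Box G l) Del) \<and>
            derivable (add_mset (Box G l) Sig') Gam' Del'
            \<longrightarrow> derivable (Sig' + Sig) (Gam + Gam') (Del + Del'))"
proof (intro conjI allI impI)
  fix Gam Del Gam' Del' :: "('a, 'p) fm multiset" and l :: "('a, 'p) fm"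
  assume "wf_ms Gam \<and> wf_ms Del \<and> wf_ms Gam' \<and> wf_ms Del' \<and> wf l \<and>
    derivable {#} Gam (add_mset l Del) \<and> derivable {#} (add_mset l Gam') Del'"
  then show "derivable {#} (Gam + Gam') (Del + Del')"
    using admissible_cut1D[OF admissible_cut1] by blast
next
  fix Sig Sig' Gam Del Gam' Del' :: "('a, 'p) fm multiset" and G and l :: "('a, 'p) fm"
  assume "boxed_ms Sig \<and> boxed_ms Sig' \<and> wf_ms Sig \<and> wf_ms Sig' \<and>
    wf_ms Gam \<and> wf_ms Del \<and> wf_ms Gam' \<and> wf_ms Del' \<and> G \<noteq> {} \<and> wf l \<and>
    derivable Sig Gam (add_mset (Box G l) Del) \<and> derivable (add_mset (Box G l) Sig') Gam' Del'"
  then have "derivable Sig Gam (add_mset (Box G l) Del)"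
    and "derivable (add_mset (Box G l) Sig') Gam' Del'"
    by simp_all
  from derivable_cut2[OF admissible_cut1 this]
  show "derivable (Sig' + Sig) (Gam + Gam') (Del + Del')" by simp
qed

end
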